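(* Let $X$ be a non-empty set and let $E$ be any maximal right pre-reduced subset of $E(T_X^0)$, regarded as a subset of $TRel_X^0$. Then $TRel_X^0$ is an inductive left $E$-monoid, integral with $0\in E$, and $(Rel_X,\circledast,D)\cong Rest_0(E,TRel_X^0)$ as unary semigroups.
   Context: Relations are composed left to right: for binary relations $\rho,\tau$ on $X$, $\rho\tau=\{(x,y)\mid \exists z: (x,z)\in\rho,(z,y)\in\tau\}$. $Rel_X$ is the set of binary relations on $X$; $\mathrm{dom}(\rho)=\{x\mid \exists y:(x,y)\in\rho\}$. Demonic composition is $\rho\circledast\tau=\{(x,y)\in\rho\tau\mid \text{for all } z\in X,\ (x,z)\in\rho\Rightarrow z\in\mathrm{dom}(\tau)\}$, and $D(\rho)$ is the identity relation on $\mathrm{dom}(\rho)$; $(Rel_X,\circledast,D)$ is a left restriction monoid. $TRel_X$ is the set of left total relations ($\mathrm{dom}(\rho)=X$), a monoid under (ordinary = demonic) composition containing $T_X$ (total functions $X\to X$) as a submonoid; $T_X^0$ and $TRel_X^0$ denote these with a new zero element $0$ adjoined, so $T_X^0\subseteq TRel_X^0$. For a semigroup $S$, $E(S)$ is its set of idempotents; for $e,f\in E(S)$, $e\le_r f$ iff $e=ef$, and $e\sim_r f$ iff $e\le_r f$ and $f\le_r e$. $E\subseteq E(S)$ is right pre-reduced if $e=ef$ and $f=fe$ imply $e=f$ for $e,f\in E$, and maximal right pre-reduced if it contains exactly one element of each $\sim_r$-class of $E(S)$. A monoid with zero is integral if $st=0$ implies $s=0$ or $t=0$. Let $S$ be a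 monoid and $1\in E\subseteq E(S)$. $S$ is an inductive left $E$-monoid if $E$ is right pre-reduced, $(E,\le_r)$ is a meet-semilattice with meet $\wedge$, and (I1') for all $t\in S$, $e\in E$ there is $t\cdot e\in E$ such that for all $s\in S$: $ste=st$ iff $s(t\cdot e)=s$; (I2') for $s\in S$, $e,f\in E$: $se=sf=s$ implies $s(e\wedge f)=s$. If $S$ is also integral with zero and $0\in E$, $Rest_0(E,S)$ is the set $\{(e,s)\in E\times S\mid es=s,\ s=0\Rightarrow e=0\}$ with multiplication $(e,s)(f,t)=(e\wedge(s\cdot f),(e\wedge(s\cdot f))st)$ and $D((e,s))=(e,e)$. *)

theory Defs
  imports Main
begin

definition idems :: "'s set \<Rightarrow> ('s \<Rightarrow> 's \<Rightarrow> 's) \<Rightarrow> 's set" where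
  "idems S m = {e \<in> S. m e e = e}"

definition le_r :: "('s \<Rightarrow> 's \<Rightarrow> 's) \<Rightarrow> 's \<Rightarrow> 's \<Rightarrow> bool" where
  "le_r m e f \<longleftrightarrow> e = m e f"

definition sim_r :: "('s \<Rightarrow> 's \<Rightarrow> 's) \<Rightarrow> 's \<Rightarrow> 's \<Rightarrow> bool" where
  "sim_r m e f \<longleftrightarrow> le_r m e f \<and> le_r m f e"

definition right_pre_reduced :: "('s \<Rightarrow> 's \<Rightarrow> 's) \<Rightarrow> 's set \<Rightarrow> bool" where
  "right_pre_reduced m E \<longleftrightarrow>
     (\<forall>e\<in>E. \<forall>f\<in>E. e = m e f \<and> f = m f e \<longrightarrow> e = f)"

definition max_right_pre_reduced :: "'s set \<Rightarrow> ('s \<Rightarrow> 's \<Rightarrow> 's) \<Rightarrow> 's set \<Rightarrow> bool" where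
  "max_right_pre_reduced S m E \<longleftrightarrow>
     E \<subseteq> idems S m \<and> (\<forall>e\<in>idems S m. \<exists>!f. f \<in> E \<and> sim_r m e f)"

definition is_monoid :: "'s set \<Rightarrow> ('s \<Rightarrow> 's \<Rightarrow> 's) \<Rightarrow> 's \<Rightarrow> bool" where
  "is_monoid S m u \<longleftrightarrow> u \<in> S \<and> (\<forall>a\<in>S. \<forall>b\<in>S. m a b \<in> S)
     \<and> (\<forall>a\<in>S. \<forall>b\<in>S. \<forall>c\<in>S. m (m a b) c = m a (m b c))
     \<and> (\<forall>a\<in>S. m u a = a \<and> m a u = a)"

definition is_meet :: "('s \<Rightarrow> 's \<Rightarrow> 's) \<Rightarrow> 's set \<Rightarrow> 's \<Rightarrow> 's \<Rightarrow> 's \<Rightarrow> bool" where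
  "is_meet m E e f g \<longleftrightarrow> g \<in> E \<and> le_r m g e \<and> le_r m g f \<and>
     (\<forall>h\<in>E. le_r m h e \<and> le_r m h f \<longrightarrow> le_r m h g)"

definition meet :: "('s \<Rightarrow> 's \<Rightarrow> 's) \<Rightarrow> 's set \<Rightarrow> 's \<Rightarrow> 's \<Rightarrow> 's" where
  "meet m E e f = (THE g. is_meet m E e f g)"

definition dot_cond :: "'s set \<Rightarrow> ('s \<Rightarrow> 's \<Rightarrow> 's) \<Rightarrow> 's set \<Rightarrow> 's \<Rightarrow> 's \<Rightarrow> 's \<Rightarrow> bool" where
  "dot_cond S m E t e g \<longleftrightarrow> g \<in> E \<and> (\<forall>s\<in>S. m (m s t) e = m s t \<longleftrightarrow> m s g = s)"

definition dot :: "'s set \<Rightarrow> ('s \<Rightarrow> 's \<Rightarrow> 's) \<Rightarrow> 's set \<Rightarrow> 's \<Rightarrow> 's \<Rightarrow> 's" where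
  "dot S m E t e = (THE g. dot_cond S m E t e g)"

definition inductive_left_E_monoid ::
  "'s set \<Rightarrow> ('s \<Rightarrow> 's \<Rightarrow> 's) \<Rightarrow> 's \<Rightarrow> 's set \<Rightarrow> bool" where
  "inductive_left_E_monoid S m u E \<longleftrightarrow>
     is_monoid S m u \<and> u \<in> E \<and> E \<subseteq> idems S m \<and>
     right_pre_reduced m E \<and>
     (\<forall>e\<in>E. \<forall>f\<in>E. \<exists>g. is_meet m E e f g) \<and>
     (\<forall>t\<in>S. \<forall>e\<in>E. \<exists>g. dot_cond S m E t e g) \<and>
     (\<forall>s\<in>S. \<forall>e\<in>E. \<forall>f\<in>E. m s e = s \<and> m s f = s \<longrightarrow> m s (meet m E e f) = s)"

definition integral_with_zero :: "'s set \<Rightarrow> ('s \<Rightarrow> 's \<Rightarrow> 's) \<Rightarrow> 's \<Rightarrow> bool" where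
  "integral_with_zero S m z \<longleftrightarrow> z \<in> S \<and> (\<forall>s\<in>S. m z s = z \<and> m s z = z) \<and>
     (\<forall>s\<in>S. \<forall>t\<in>S. m s t = z \<longrightarrow> s = z \<or> t = z)"

definition rest0 :: "'s set \<Rightarrow> ('s \<Rightarrow> 's \<Rightarrow> 's) \<Rightarrow> 's set \<Rightarrow> 's \<Rightarrow> ('s \<times> 's) set" where
  "rest0 S m E z = {(e, s). e \<in> E \<and> s \<in> S \<and> m e s = s \<and> (s = z \<longrightarrow> e = z)}"

definition rest0_mult :: "'s set \<Rightarrow> ('s \<Rightarrow> 's \<Rightarrow> 's) \<Rightarrow> 's set \<Rightarrow> 's \<times> 's \<Rightarrow> 's \<times> 's \<Rightarrow> 's \<times> 's" where
  "rest0_mult S m E p q =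
     (let g = meet m E (fst p) (dot S m E (snd p) (fst q)) in (g, m (m g (snd p)) (snd q)))"

definition rest0_D :: "'s \<times> 's \<Rightarrow> 's \<times> 's" where
  "rest0_D p = (fst p, fst p)"

section \<open>Relations on a type 'a (X = UNIV :: 'a set)\<close>

definition demonic :: "'a rel \<Rightarrow> 'a rel \<Rightarrow> 'a rel" where
  "demonic \<rho> \<tau> = {(x, y). (x, y) \<in> \<rho> O \<tau> \<and> (\<forall>z. (x, z) \<in> \<rho> \<longrightarrow> z \<in> Domain \<tau>)}"

definition Dom_id :: "'a rel \<Rightarrow> 'a rel" where
  "Dom_id \<rho> = Id_on (Domain \<rho>)"

text \<open>Monoids with adjoined zero: None is the new zero 0.\<close>
fun mult0 :: "'a rel option \<Rightarrow> 'a rel option \<Rightarrow> 'a rel option" where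
  "mult0 (Some a) (Some b) = Some (a O b)"
| "mult0 _ _ = None"

definition graph :: "('a \<Rightarrow> 'a) \<Rightarrow> 'a rel" where
  "graph f = {(x, f x) | x. True}"

definition TX0 :: "'a rel option set" where
  "TX0 = insert None (Some ` (graph ` UNIV))"

definition TRelX0 :: "'a rel option set" where
  "TRelX0 = insert None (Some ` {\<rho>. Domain \<rho> = UNIV})"

end

theory Submission
  imports Defs
begin

(* An idempotent total map is a retraction onto its image, and two of them are sim_r-related
   exactly when their images agree.  Hence E consists of 0 and one retraction e_A onto each
   non-empty A, and A \<mapsto> e_A (with {} \<mapsto> 0) is an order isomorphism from the subsets of X onto
   (E, le_r): meets are intersections, and for a left total \<tau> the element \<tau> \<cdot> e_A is e_B,
   B being the set of points all of whose \<tau>-images lie in A.  A relation \<rho> with domain A is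
   sent to (e_A, e_A \<rho>): composing with e_A makes \<rho> left total, and \<rho> is the restriction of
   e_A \<rho> to A.  For B = dom \<tau> and (e_A \<rho>) \<cdot> e_B = e_B', the domain of \<rho> \<circledast> \<tau> is A \<inter> B', which
   is what the first component of the product in Rest_0 records; on that set e_B fixes all
   \<rho>-images, so the second components agree as well. *)

lemma meet_eqI:
  assumes "right_pre_reduced m E" and "is_meet m E e f g"
  shows "meet m E e f = g"
  unfolding meet_def
proof (rule the_equality)
  show "is_meet m E e f g" by fact
  fix g' assume "is_meet m E e f g'"
  with assms show "g' = g" unfolding is_meet_def right_pre_reduced_def le_r_def by metis
qed

lemma dot_eqI:
  assumes "right_pre_reduced m E" and "E \<subseteq> idems S m" and "dot_cond S m E t e g"
  shows "dot S m E t e = g"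
  unfolding dot_def
proof (rule the_equality)
  show "dot_cond S m E t e g" by fact
  fix g' assume g': "dot_cond S m E t e g'"
  have E: "g \<in> E" "g' \<in> E" using assms(3) g' by (auto simp: dot_cond_def)
  then have "g \<in> S" "g' \<in> S" "m g g = g" "m g' g' = g'" using assms(2) by (auto simp: idems_def)
  then have "m g g' = g" "m g' g = g'" using assms(3) g' unfolding dot_cond_def by metis+
  with assms(1) E show "g' = g" unfolding right_pre_reduced_def by metis
qed

lemma in_graph_iff [simp]: "(x, y) \<in> graph f \<longleftrightarrow> y = f x"
  by (auto simp: graph_def)

lemma graph_relcomp_iff [simp]: "(x, y) \<in> graph f O r \<longleftrightarrow> (f x, y) \<in> r"
  by auto

lemma Domain_graph [simp]: "Domain (graph f) = UNIV"
  by auto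

lemma Range_graph [simp]: "Range (graph f) = range f"
  by auto

lemma graph_relcomp_graph: "graph f O graph g = graph (g \<circ> f)"
  by auto

lemma graph_eq_iff: "graph f = graph g \<longleftrightarrow> f = g"
  by (auto simp: set_eq_iff fun_eq_iff)

lemma graph_id: "graph id = Id"
  by auto

definition is_retraction :: "'a set \<Rightarrow> ('a \<Rightarrow> 'a) \<Rightarrow> bool" where
  "is_retraction A f \<longleftrightarrow> (\<forall>x. f x \<in> A) \<and> (\<forall>x\<in>A. f x = x)"

lemma is_retraction_iff: "is_retraction A f \<longleftrightarrow> f \<circ> f = f \<and> range f = A"
proof
  assume "is_retraction A f"
  then show "f \<circ> f = f \<and> range f = A"
    unfolding is_retraction_def by (auto simp: fun_eq_iff) (metis rangeI)
next
  assume idem: "f \<circ> f = f \<and> range f = A"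
  have "f x = x" if "x \<in> A" for x
  proof -
    from that idem obtain y where "x = f y" by auto
    with idem show ?thesis by (metis comp_apply)
  qed
  with idem show "is_retraction A f" unfolding is_retraction_def by auto
qed

lemma range_retraction: "is_retraction A f \<Longrightarrow> range f = A"
  by (simp add: is_retraction_iff)

lemma retraction_exists:
  assumes "A \<noteq> {}"
  shows "\<exists>f. is_retraction A f"
proof -
  from assms obtain a where "a \<in> A" by blast
  then have "is_retraction A (\<lambda>x. if x \<in> A then x else a)"
    by (simp add: is_retraction_def)
  then show ?thesis by blast
qed

lemma is_retraction_UNIV_iff: "is_retraction UNIV f \<longleftrightarrow> f = id"
  by (auto simp: is_retraction_def)

lemma relcomp_graph_retraction_eq_iff:
  assumes "is_retraction A f"
  shows "r O graph f = r \<longleftrightarrow> Range r \<subseteq> A"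
proof
  assume eq: "r O graph f = r"
  have "Range (r O graph f) \<subseteq> A" using assms by (auto simp: is_retraction_def)
  with eq show "Range r \<subseteq> A" by simp
next
  assume "Range r \<subseteq> A"
  then show "r O graph f = r" using assms by (force simp: is_retraction_def)
qed

lemma graph_retraction_relcomp_Id_on:
  assumes "is_retraction A f"
  shows "graph f O Id_on A = graph f"
  using assms unfolding is_retraction_def by auto

lemma Id_on_relcomp_graph_retraction:
  assumes "is_retraction A f" and "C \<subseteq> A"
  shows "Id_on C O graph f = Id_on C"
  using assms unfolding is_retraction_def by force

lemma idems_TX0_iff:
  "u \<in> idems TX0 mult0 \<longleftrightarrow> u = None \<or> (\<exists>f. u = Some (graph f) \<and> is_retraction (range f) f)"
  by (auto simp: idems_def TX0_def graph_relcomp_graph graph_eq_iff is_retraction_iff)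

lemma le_r_graph_iff:
  assumes "is_retraction (range g) g"
  shows "le_r mult0 (Some (graph f)) (Some (graph g)) \<longleftrightarrow> range f \<subseteq> range g"
  using relcomp_graph_retraction_eq_iff[OF assms, of "graph f"] by (auto simp: le_r_def)

lemma sim_r_graph_iff:
  assumes "is_retraction (range f) f" and "is_retraction (range g) g"
  shows "sim_r mult0 (Some (graph f)) (Some (graph g)) \<longleftrightarrow> range f = range g"
  using assms by (auto simp: sim_r_def le_r_graph_iff)

lemma sim_r_None_iff: "sim_r mult0 None u \<longleftrightarrow> u = None" "sim_r mult0 u None \<longleftrightarrow> u = None"
  by (cases u; simp add: sim_r_def le_r_def)+

lemma max_right_pre_reduced_TX0_cases:
  assumes "max_right_pre_reduced TX0 mult0 E" and "u \<in> E"
  shows "u = None \<or> (\<exists>f. u = Some (graph f) \<and> is_retraction (range f) f)"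
proof -
  from assms have "u \<in> idems TX0 mult0" by (auto simp: max_right_pre_reduced_def)
  then show ?thesis by (simp add: idems_TX0_iff)
qed

lemma max_right_pre_reduced_TX0_None:
  assumes "max_right_pre_reduced TX0 mult0 E"
  shows "None \<in> E"
proof -
  have "None \<in> idems TX0 mult0" by (simp add: idems_TX0_iff)
  with assms obtain v where "v \<in> E" "sim_r mult0 None v"
    by (auto simp: max_right_pre_reduced_def)
  then show ?thesis by (simp add: sim_r_None_iff)
qed

lemma max_right_pre_reduced_TX0_ex1_retraction:
  fixes E :: "'a rel option set"
  assumes max: "max_right_pre_reduced TX0 mult0 E" and A: "A \<noteq> {}"
  shows "\<exists>!f. Some (graph f) \<in> E \<and> is_retraction A f"
proof -
  obtain r where r: "is_retraction A r" using retraction_exists[OF A] by blast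
  then have r_idem: "Some (graph r) \<in> idems TX0 mult0"
    by (auto simp: idems_TX0_iff dest: range_retraction)
  with max have uniq: "\<exists>!v. v \<in> E \<and> sim_r mult0 (Some (graph r)) v"
    by (simp add: max_right_pre_reduced_def)
  have sim_iff: "sim_r mult0 (Some (graph r)) (Some (graph f)) \<longleftrightarrow> is_retraction A f"
    if "is_retraction (range f) f" for f
  proof -
    have "is_retraction (range r) r" and "range r = A" using r by (simp_all add: range_retraction)
    then have "sim_r mult0 (Some (graph r)) (Some (graph f)) \<longleftrightarrow> A = range f"
      using sim_r_graph_iff that by blast
    also have "\<dots> \<longleftrightarrow> is_retraction A f" using that range_retraction by metis
    finally show ?thesis .
  qed
  obtain v where v: "v \<in> E" "sim_r mult0 (Some (graph r)) v" using uniq by blast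
  moreover from v(2) have "v \<noteq> None" by (cases v) (simp_all add: sim_r_None_iff)
  ultimately obtain f where f: "v = Some (graph f)" "is_retraction (range f) f"
    using max_right_pre_reduced_TX0_cases[OF max] by blast
  with v sim_iff have "Some (graph f) \<in> E \<and> is_retraction A f" by blast
  moreover have "f' = f" if "Some (graph f') \<in> E \<and> is_retraction A f'" for f'
  proof -
    have "is_retraction (range f') f'" using that range_retraction[of A f'] by simp
    with that sim_iff have "Some (graph f') \<in> E \<and> sim_r mult0 (Some (graph r)) (Some (graph f'))"
      by blast
    with v uniq have "Some (graph f') = v" by (metis (no_types, lifting))
    with f(1) show ?thesis by (simp add: graph_eq_iff)
  qed
  ultimately show ?thesis by blast
qed

lemma max_right_pre_reduced_TX0_retractions:
  fixes E :: "'a rel option set"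
  assumes max: "max_right_pre_reduced TX0 mult0 E"
  obtains ret where "\<And>A. A \<noteq> {} \<Longrightarrow> is_retraction A (ret A)"
    and "E = insert None {Some (graph (ret A)) | A. A \<noteq> {}}"
proof
  note ex1 = max_right_pre_reduced_TX0_ex1_retraction[OF max]
  define ret where "ret A = (THE f. Some (graph f) \<in> E \<and> is_retraction A f)" for A
  have ret: "Some (graph (ret A)) \<in> E \<and> is_retraction A (ret A)" if "A \<noteq> {}" for A
    using theI'[OF ex1[OF that]] by (simp add: ret_def)
  then show "is_retraction A (ret A)" if "A \<noteq> {}" for A
    using that by blast
  show "E = insert None {Some (graph (ret A)) | A. A \<noteq> {}}"
  proof (intro equalityI subsetI)
    fix u assume u: "u \<in> E"
    show "u \<in> insert None {Some (graph (ret A)) | A. A \<noteq> {}}"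
    proof (cases "u = None")
      case False
      with u max_right_pre_reduced_TX0_cases[OF max] obtain f
        where f: "u = Some (graph f)" "is_retraction (range f) f"
        by blast
      have "ret (range f) = f"
        unfolding ret_def by (rule the1_equality[OF ex1]) (use u f in auto)
      with f(1) have "u = Some (graph (ret (range f)))" by simp
      moreover have "range f \<noteq> {}" by simp
      ultimately show ?thesis by blast
    qed simp
  next
    fix u assume "u \<in> insert None {Some (graph (ret A)) | A. A \<noteq> {}}"
    with max_right_pre_reduced_TX0_None[OF max] ret show "u \<in> E" by blast
  qed
qed

lemma Some_in_TRelX0_iff [simp]: "Some \<sigma> \<in> TRelX0 \<longleftrightarrow> Domain \<sigma> = UNIV"
  by (auto simp: TRelX0_def)

lemma None_in_TRelX0 [simp]: "None \<in> TRelX0"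
  by (simp add: TRelX0_def)

lemma mult0_assoc: "mult0 (mult0 a b) c = mult0 a (mult0 b c)"
  by (cases a; cases b; cases c) (simp_all add: O_assoc)

lemma mult0_Some_Id [simp]: "mult0 (Some Id) a = a" "mult0 a (Some Id) = a"
  by (cases a; simp)+

lemma Domain_relcomp_UNIV:
  assumes "Domain \<sigma> = UNIV" and "Domain \<tau> = UNIV"
  shows "Domain (\<sigma> O \<tau>) = UNIV"
proof -
  have "x \<in> Domain (\<sigma> O \<tau>)" for x
  proof -
    obtain y where "(x, y) \<in> \<sigma>" using assms(1) by blast
    moreover obtain z where "(y, z) \<in> \<tau>" using assms(2) by blast
    ultimately show ?thesis by blast
  qed
  then show ?thesis by blast
qed

lemma is_monoid_TRelX0: "is_monoid TRelX0 mult0 (Some Id)"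
proof -
  have "mult0 a b \<in> TRelX0" if "a \<in> TRelX0" "b \<in> TRelX0" for a b
    using that by (cases a; cases b) (simp_all add: Domain_relcomp_UNIV)
  then show ?thesis by (auto simp: is_monoid_def mult0_assoc)
qed

lemma integral_with_zero_TRelX0: "integral_with_zero TRelX0 mult0 None"
  unfolding integral_with_zero_def by (auto elim!: mult0.elims)

lemma Domain_demonic: "Domain (demonic \<rho> \<tau>) = {x \<in> Domain \<rho>. \<rho> `` {x} \<subseteq> Domain \<tau>}"
  by (auto simp: demonic_def) blast

lemma graph_retractions_relcomp_demonic:
  assumes f: "is_retraction (Domain \<rho>) f" and g: "is_retraction (Domain \<tau>) g"
    and h: "is_retraction (Domain (demonic \<rho> \<tau>)) h"
  shows "graph h O graph f O \<rho> O graph g O \<tau> = graph h O demonic \<rho> \<tau>"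
proof (rule set_eqI, clarify)
  fix x w
  define c where "c = h x"
  have c: "c \<in> Domain \<rho>" "\<rho> `` {c} \<subseteq> Domain \<tau>"
    using h by (auto simp: c_def is_retraction_def Domain_demonic)
  with f have "f c = c" by (simp add: is_retraction_def)
  then have "(x, w) \<in> graph h O graph f O \<rho> O graph g O \<tau> \<longleftrightarrow>
      (\<exists>y. (c, y) \<in> \<rho> \<and> (g y, w) \<in> \<tau>)"
    by (auto simp: c_def)
  also have "\<dots> \<longleftrightarrow> (c, w) \<in> \<rho> O \<tau>"
  proof -
    have "g y = y" if "(c, y) \<in> \<rho>" for y
      using c(2) g that by (auto simp: is_retraction_def)
    then show ?thesis by auto
  qed
  also have "\<dots> \<longleftrightarrow> (c, w) \<in> demonic \<rho> \<tau>"
    using c by (auto simp: demonic_def)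
  finally show "(x, w) \<in> graph h O graph f O \<rho> O graph g O \<tau> \<longleftrightarrow>
      (x, w) \<in> graph h O demonic \<rho> \<tau>"
    by (simp add: c_def)
qed

locale retraction_choice =
  fixes E :: "'a rel option set" and ret :: "'a set \<Rightarrow> 'a \<Rightarrow> 'a"
  assumes is_retraction_ret: "A \<noteq> {} \<Longrightarrow> is_retraction A (ret A)"
    and E_eq: "E = insert None {Some (graph (ret A)) | A. A \<noteq> {}}"
begin

definition proj :: "'a set \<Rightarrow> 'a rel option" where
  "proj A = (if A = {} then None else Some (graph (ret A)))"

lemma proj_empty [simp]: "proj {} = None"
  by (simp add: proj_def)

lemma E_eq_range_proj: "E = range proj"
  unfolding E_eq proj_def by auto

lemma proj_in_E [simp]: "proj A \<in> E"
  by (simp add: E_eq_range_proj)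

lemma None_in_E [simp]: "None \<in> E"
  using proj_in_E[of "{}"] by simp

lemma proj_UNIV: "proj UNIV = Some Id"
  using is_retraction_ret[of UNIV] by (simp add: proj_def is_retraction_UNIV_iff graph_id)

lemma mult0_proj_Some: "A \<noteq> {} \<Longrightarrow> mult0 (proj A) (Some \<rho>) = Some (graph (ret A) O \<rho>)"
  by (simp add: proj_def)

lemma mult0_Some_proj_eq_iff:
  assumes "Domain \<sigma> = UNIV"
  shows "mult0 (Some \<sigma>) (proj A) = Some \<sigma> \<longleftrightarrow> Range \<sigma> \<subseteq> A"
proof (cases "A = {}")
  case True
  with assms show ?thesis by auto
next
  case False
  with relcomp_graph_retraction_eq_iff[OF is_retraction_ret] show ?thesis
    by (simp add: proj_def)
qed

lemma le_r_proj_iff: "le_r mult0 (proj A) (proj B) \<longleftrightarrow> A \<subseteq> B"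
proof (cases "A = {}")
  case True
  then show ?thesis by (simp add: le_r_def)
next
  case False
  then have "proj A = Some (graph (ret A))" by (simp add: proj_def)
  then have "le_r mult0 (proj A) (proj B) \<longleftrightarrow> Range (graph (ret A)) \<subseteq> B"
    using mult0_Some_proj_eq_iff[of "graph (ret A)" B] by (simp add: le_r_def eq_commute)
  with range_retraction[OF is_retraction_ret[OF False]] show ?thesis by simp
qed

lemma proj_eq_iff: "proj A = proj B \<longleftrightarrow> A = B"
  by (metis le_r_proj_iff subset_antisym subset_refl)

lemma right_pre_reduced_E: "right_pre_reduced mult0 E"
  unfolding right_pre_reduced_def E_eq_range_proj
  by (auto simp: le_r_proj_iff[unfolded le_r_def])

lemma is_meet_proj: "is_meet mult0 E (proj A) (proj B) (proj (A \<inter> B))"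
  unfolding is_meet_def E_eq_range_proj by (auto simp: le_r_proj_iff)

lemma meet_proj: "meet mult0 E (proj A) (proj B) = proj (A \<inter> B)"
  by (rule meet_eqI[OF right_pre_reduced_E is_meet_proj])

lemma E_subset_idems: "E \<subseteq> idems TRelX0 mult0"
proof
  fix e assume "e \<in> E"
  then obtain A where A: "e = proj A" by (auto simp: E_eq_range_proj)
  have "e \<in> TRelX0"
    using A is_retraction_ret by (simp add: proj_def is_retraction_def)
  moreover have "mult0 e e = e"
    using A le_r_proj_iff[of A A] by (simp add: le_r_def)
  ultimately show "e \<in> idems TRelX0 mult0" by (simp add: idems_def)
qed

lemma dot_cond_None: "dot_cond TRelX0 mult0 E None e (proj UNIV)"
  using proj_in_E[of UNIV] by (simp add: dot_cond_def proj_UNIV)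

lemma dot_cond_Some_proj:
  assumes "Domain \<tau> = UNIV"
  shows "dot_cond TRelX0 mult0 E (Some \<tau>) (proj A) (proj {z. \<tau> `` {z} \<subseteq> A})"
  unfolding dot_cond_def
proof (intro conjI ballI)
  fix s :: "'a rel option" assume "s \<in> TRelX0"
  then consider "s = None" | \<sigma> where "s = Some \<sigma>" "Domain \<sigma> = UNIV"
    by (cases s) auto
  then show "mult0 (mult0 s (Some \<tau>)) (proj A) = mult0 s (Some \<tau>) \<longleftrightarrow>
             mult0 s (proj {z. \<tau> `` {z} \<subseteq> A}) = s"
  proof cases
    case (2 \<sigma>)
    have "Range (\<sigma> O \<tau>) \<subseteq> A \<longleftrightarrow> Range \<sigma> \<subseteq> {z. \<tau> `` {z} \<subseteq> A}"
      by blast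
    with 2 assms show ?thesis
      by (simp add: mult0_Some_proj_eq_iff Domain_relcomp_UNIV)
  qed simp
qed simp

lemma dot_None: "dot TRelX0 mult0 E None (proj A) = proj UNIV"
  by (rule dot_eqI[OF right_pre_reduced_E E_subset_idems dot_cond_None])

lemma dot_Some_proj:
  "Domain \<tau> = UNIV \<Longrightarrow> dot TRelX0 mult0 E (Some \<tau>) (proj A) = proj {z. \<tau> `` {z} \<subseteq> A}"
  by (rule dot_eqI[OF right_pre_reduced_E E_subset_idems dot_cond_Some_proj])

lemma inductive_left_E_monoid_TRelX0: "inductive_left_E_monoid TRelX0 mult0 (Some Id) E"
  unfolding inductive_left_E_monoid_def
proof (intro conjI ballI allI impI)
  show "Some Id \<in> E" using proj_in_E[of UNIV] by (simp add: proj_UNIV)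
  show "\<exists>g. is_meet mult0 E e f g" if "e \<in> E" "f \<in> E" for e f
    using that is_meet_proj by (auto simp: E_eq_range_proj)
  show "\<exists>g. dot_cond TRelX0 mult0 E t e g" if "t \<in> TRelX0" "e \<in> E" for t e
    using that dot_cond_None dot_cond_Some_proj by (cases t) (auto simp: E_eq_range_proj, blast)
  show "mult0 s (meet mult0 E e f) = s"
    if s: "s \<in> TRelX0" and ef: "e \<in> E" "f \<in> E" and fixed: "mult0 s e = s \<and> mult0 s f = s"
    for s e f
  proof (cases s)
    case (Some \<sigma>)
    obtain A B where "e = proj A" "f = proj B" using ef by (auto simp: E_eq_range_proj)
    with s fixed Some show ?thesis by (simp add: mult0_Some_proj_eq_iff meet_proj)
  qed simp
qed (simp_all add: is_monoid_TRelX0 E_subset_idems right_pre_reduced_E)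

definition rest_pair :: "'a rel \<Rightarrow> 'a rel option \<times> 'a rel option" where
  "rest_pair \<rho> = (proj (Domain \<rho>), mult0 (proj (Domain \<rho>)) (Some \<rho>))"

lemma Domain_graph_ret_relcomp:
  assumes "\<rho> \<noteq> {}"
  shows "Domain (graph (ret (Domain \<rho>)) O \<rho>) = UNIV"
proof -
  have "ret (Domain \<rho>) x \<in> Domain \<rho>" for x
    using is_retraction_ret[of "Domain \<rho>"] assms by (simp add: is_retraction_def Domain_empty_iff)
  then show ?thesis by fastforce
qed

lemma rest_pair_in_rest0: "rest_pair \<rho> \<in> rest0 TRelX0 mult0 E None"
proof (cases "\<rho> = {}")
  case False
  then have "graph (ret (Domain \<rho>)) O graph (ret (Domain \<rho>)) = graph (ret (Domain \<rho>))"
    using is_retraction_ret[of "Domain \<rho>"]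
    by (simp add: graph_relcomp_graph is_retraction_iff Domain_empty_iff)
  with False Domain_graph_ret_relcomp show ?thesis
    by (simp add: rest_pair_def rest0_def mult0_proj_Some O_assoc[symmetric] Domain_empty_iff)
qed (simp add: rest_pair_def rest0_def)

lemma restrict_graph_ret_relcomp:
  "Id_on (Domain \<rho>) O graph (ret (Domain \<rho>)) O \<rho> = \<rho>"
proof (cases "\<rho> = {}")
  case False
  then have "Id_on (Domain \<rho>) O graph (ret (Domain \<rho>)) = Id_on (Domain \<rho>)"
    using Id_on_relcomp_graph_retraction[OF is_retraction_ret[of "Domain \<rho>"] subset_refl]
    by (simp add: Domain_empty_iff)
  then show ?thesis by (auto simp: O_assoc[symmetric])
qed simp

lemma inj_rest_pair: "inj rest_pair"
proof (rule injI)
  fix \<rho> \<rho>' assume eq: "rest_pair \<rho> = rest_pair \<rho>'"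
  then have dom: "Domain \<rho> = Domain \<rho>'" by (simp add: rest_pair_def proj_eq_iff)
  show "\<rho> = \<rho>'"
  proof (cases "\<rho> = {}")
    case True
    with dom show ?thesis by (metis Domain_empty_iff)
  next
    case False
    with dom have "Domain \<rho>' \<noteq> {}" by (metis Domain_empty_iff)
    with eq dom have "graph (ret (Domain \<rho>)) O \<rho> = graph (ret (Domain \<rho>)) O \<rho>'"
      by (simp add: rest_pair_def mult0_proj_Some Domain_empty_iff)
    with dom show ?thesis
      using restrict_graph_ret_relcomp[of \<rho>] restrict_graph_ret_relcomp[of \<rho>'] by metis
  qed
qed

lemma rest0_subset_range_rest_pair: "rest0 TRelX0 mult0 E None \<subseteq> range rest_pair"
proof
  fix p assume "p \<in> rest0 TRelX0 mult0 E None"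
  then obtain A s where p: "p = (proj A, s)" and s: "s \<in> TRelX0"
    and fixed: "mult0 (proj A) s = s" and zero: "s = None \<longrightarrow> proj A = None"
    by (auto simp: rest0_def E_eq_range_proj)
  show "p \<in> range rest_pair"
  proof (cases s)
    case None
    with p zero have "p = rest_pair {}" by (simp add: rest_pair_def)
    then show ?thesis by blast
  next
    case (Some \<sigma>)
    with fixed have A: "A \<noteq> {}" by auto
    with fixed Some have \<sigma>: "graph (ret A) O \<sigma> = \<sigma>" by (simp add: mult0_proj_Some)
    have total: "Domain \<sigma> = UNIV" using s Some by simp
    have "Domain (Id_on A O \<sigma>) = A" using total by blast
    moreover have "graph (ret A) O Id_on A O \<sigma> = \<sigma>"
      using \<sigma> graph_retraction_relcomp_Id_on[OF is_retraction_ret[OF A]]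
      by (simp add: O_assoc[symmetric])
    ultimately have "rest_pair (Id_on A O \<sigma>) = p"
      using p Some A by (simp add: rest_pair_def mult0_proj_Some)
    then show ?thesis by (metis rangeI)
  qed
qed

lemma bij_rest_pair: "bij_betw rest_pair UNIV (rest0 TRelX0 mult0 E None)"
  unfolding bij_betw_def
  using inj_rest_pair rest_pair_in_rest0 rest0_subset_range_rest_pair by blast

lemma rest_pair_Dom_id: "rest_pair (Dom_id \<rho>) = rest0_D (rest_pair \<rho>)"
proof (cases "\<rho> = {}")
  case False
  then show ?thesis
    using graph_retraction_relcomp_Id_on[OF is_retraction_ret]
    by (simp add: rest_pair_def Dom_id_def rest0_D_def mult0_proj_Some proj_def)
qed (simp add: rest_pair_def Dom_id_def rest0_D_def)

lemma rest_pair_demonic: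
  "rest_pair (demonic \<rho> \<tau>) = rest0_mult TRelX0 mult0 E (rest_pair \<rho>) (rest_pair \<tau>)"
proof (cases "\<rho> = {}")
  case True
  then have "demonic \<rho> \<tau> = {}" by (simp add: demonic_def)
  with True show ?thesis
    using meet_proj[of "{}" UNIV]
    by (simp add: rest_pair_def rest0_mult_def dot_None proj_UNIV)
next
  case False
  define A B C where "A = Domain \<rho>" and "B = Domain \<tau>" and "C = Domain (demonic \<rho> \<tau>)"
  define \<sigma> where "\<sigma> = graph (ret A) O \<rho>"
  have A: "A \<noteq> {}" using False by (simp add: A_def Domain_empty_iff)
  have rest_\<rho>: "rest_pair \<rho> = (proj A, Some \<sigma>)"
    using A by (simp add: rest_pair_def A_def \<sigma>_def mult0_proj_Some)
  have rest_\<tau>: "rest_pair \<tau> = (proj B, mult0 (proj B) (Some \<tau>))"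
    by (simp add: rest_pair_def B_def)
  have rest_demonic: "rest_pair (demonic \<rho> \<tau>) = (proj C, mult0 (proj C) (Some (demonic \<rho> \<tau>)))"
    by (simp add: rest_pair_def C_def)
  have "Domain \<sigma> = UNIV"
    using Domain_graph_ret_relcomp[OF False] by (simp add: \<sigma>_def A_def)
  then have "dot TRelX0 mult0 E (Some \<sigma>) (proj B) = proj {z. \<sigma> `` {z} \<subseteq> B}"
    by (rule dot_Some_proj)
  moreover have "A \<inter> {z. \<sigma> `` {z} \<subseteq> B} = C"
  proof -
    have "\<sigma> `` {x} = \<rho> `` {x}" if "x \<in> A" for x
      using is_retraction_ret[OF A] that by (auto simp: \<sigma>_def is_retraction_def)
    then show ?thesis by (auto simp: C_def Domain_demonic A_def B_def)
  qed
  ultimately have fst: "meet mult0 E (proj A) (dot TRelX0 mult0 E (Some \<sigma>) (proj B)) = proj C"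
    by (simp add: meet_proj)
  have snd: "mult0 (mult0 (proj C) (Some \<sigma>)) (mult0 (proj B) (Some \<tau>)) =
      mult0 (proj C) (Some (demonic \<rho> \<tau>))"
  proof (cases "C = {}")
    case False
    then have "B \<noteq> {}" by (auto simp: B_def C_def Domain_demonic)
    with False A show ?thesis
      using graph_retractions_relcomp_demonic[OF is_retraction_ret is_retraction_ret is_retraction_ret]
      by (simp add: mult0_proj_Some \<sigma>_def A_def B_def C_def Domain_empty_iff O_assoc)
  qed simp
  show ?thesis by (simp add: rest_\<rho> rest_\<tau> rest_demonic rest0_mult_def Let_def fst snd)
qed

end

theorem theorem7p6:
  fixes E :: "'a rel option set"
  assumes "max_right_pre_reduced (TX0 :: 'a rel option set) mult0 E"
  shows "inductive_left_E_monoid TRelX0 mult0 (Some Id) E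
     \<and> integral_with_zero TRelX0 mult0 None \<and> None \<in> E
     \<and> (\<exists>\<phi> :: 'a rel \<Rightarrow> 'a rel option \<times> 'a rel option.
          bij_betw \<phi> UNIV (rest0 TRelX0 mult0 E None)
          \<and> (\<forall>\<rho> \<tau>. \<phi> (demonic \<rho> \<tau>) = rest0_mult TRelX0 mult0 E (\<phi> \<rho>) (\<phi> \<tau>))
          \<and> (\<forall>\<rho>. \<phi> (Dom_id \<rho>) = rest0_D (\<phi> \<rho>)))"
proof -
  obtain ret where "\<And>A. A \<noteq> {} \<Longrightarrow> is_retraction A (ret A)"
    and "E = insert None {Some (graph (ret A)) | A. A \<noteq> {}}"
    using max_right_pre_reduced_TX0_retractions[OF assms] by blast
  then interpret retraction_choice E ret by (rule retraction_choice.intro)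
  show ?thesis
    using inductive_left_E_monoid_TRelX0 integral_with_zero_TRelX0 None_in_E
      bij_rest_pair rest_pair_demonic rest_pair_Dom_id by blast
qed

end
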